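(* For every integer $n\ge0$, \[ \sum_{k=0}^n B_{n-k}^{(-k)} = \frac{(-1)^{n+1}}{2}\sum_{j=1}^{n+1}(-1)^j\, j!\, \left\{ {n+1 \atop j} \right\}\frac{\binom{2j}{j}}{3^{j-1}}\sum_{i=0}^{j-1}\frac{3^i}{(2i+1)\binom{2i}{i}}. \]
   Context: $\left\{ {n \atop j} \right\}$ denotes the Stirling number of the second kind. For an integer $k$, $\mathrm{Li}_k(z)=\sum_{m\ge1} z^m/m^k$, and the poly-Bernoulli numbers $B_n^{(k)}\in\mathbb{Q}$ are defined by $\sum_{n\ge0} B_n^{(k)} \frac{t^n}{n!} = \frac{\mathrm{Li}_k(1-e^{-t})}{1-e^{-t}}$. *)

theory Defs
  imports "HOL-Combinatorics.Stirling" "HOL-Computational_Algebra.Formal_Power_Series"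
begin

definition one_minus_exp_neg :: "rat fps" where
  "one_minus_exp_neg = 1 - fps_exp (-1)"

text \<open>The formal power series Li_k(u)/u = sum over m >= 1 of u^(m-1) / m^k.
  Since u has zero constant term, u^(m-1) has order m-1, so the coefficient
  of t^n only receives contributions from m = 1..n+1.\<close>
definition polyBern_gf :: "int \<Rightarrow> rat fps" where
  "polyBern_gf k = Abs_fps (\<lambda>n. \<Sum>m=1..n+1.
      fps_nth (one_minus_exp_neg ^ (m - 1)) n / (of_nat m) powi k)"

text \<open>Poly-Bernoulli numbers: sum_n B_n^(k) t^n/n! = Li_k(1-e^-t)/(1-e^-t).\<close>
definition polyBernoulli :: "nat \<Rightarrow> int \<Rightarrow> rat" where
  "polyBernoulli n k = fact n * fps_nth (polyBern_gf k) n"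

end

theory Submission
  imports Defs
begin

text \<open>
  Coefficient extraction in (1 - e^-t)^a gives B_m^(-k) = sum_a beta_a(m) (a+1)^k with
  beta_a(m) = (-1)^(m+a) a! S(m,a). Summed along the antidiagonal m + k = n, the part belonging
  to a is the convolution of beta_a with the powers of a+1; it re-expands in the basis
  beta_j(n+1) with the coefficients a! (j+a)! / ((2a+1)! j!), because both sides obey the
  recurrence inherited from S(N+1,j) = j S(N,j) + S(N,j-1). Summing these coefficients over
  a < j gives a sequence e_j with (j+1) e_(j+1) = 2/3 (2j+1) e_j + 1 (the key step is a sum
  that telescopes against a! (j+a)! / (2a)!), and the closed form on the right-hand side
  satisfies the same recurrence.
\<close>

definition signed_surj :: "nat \<Rightarrow> nat \<Rightarrow> 'a::field_char_0" where
  "signed_surj a m = (-1) ^ (m + a) * fact a * of_nat (Stirling m a)"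

lemma signed_surj_eq_0: "m < a \<Longrightarrow> signed_surj a m = 0"
  by (simp add: signed_surj_def)

lemma signed_surj_0_Suc: "signed_surj 0 (Suc m) = 0"
  by (simp add: signed_surj_def)

lemma signed_surj_Suc_Suc:
  "signed_surj (Suc a) (Suc m) = of_nat (Suc a) * (signed_surj a m - signed_surj (Suc a) m)"
  by (simp add: signed_surj_def algebra_simps)

lemma signed_surj_Suc:
  "signed_surj j (Suc m) =
     - of_nat j * signed_surj j m + (if j = 0 then 0 else of_nat j * signed_surj (j - 1) m)"
  by (cases j) (simp_all add: signed_surj_0_Suc signed_surj_Suc_Suc algebra_simps)

lemma fps_deriv_one_minus_exp_neg: "fps_deriv one_minus_exp_neg = 1 - one_minus_exp_neg"
proof -
  have "fps_const (-1 :: rat) = -1"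
    by (simp flip: fps_const_neg)
  then show ?thesis
    by (simp add: one_minus_exp_neg_def)
qed

lemma fps_deriv_one_minus_exp_neg_power:
  "fps_deriv (one_minus_exp_neg ^ Suc b) =
     of_nat (Suc b) * (one_minus_exp_neg ^ b - one_minus_exp_neg ^ Suc b)"
proof -
  have "fps_deriv (one_minus_exp_neg ^ Suc b) =
      of_nat (Suc b) * fps_deriv one_minus_exp_neg * one_minus_exp_neg ^ b"
    by (simp only: fps_deriv_power') simp
  then show ?thesis
    by (simp add: fps_deriv_one_minus_exp_neg algebra_simps del: of_nat_Suc)
qed

lemma fact_mult_fps_nth_one_minus_exp_neg_power:
  "fact m * fps_nth (one_minus_exp_neg ^ a) m = signed_surj a m"
proof (induction m arbitrary: a)
  case 0
  then show ?case
    by (cases a) (simp_all add: signed_surj_def one_minus_exp_neg_def fps_mult_nth_0)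
next
  case (Suc m)
  show ?case
  proof (cases a)
    case 0
    then show ?thesis by (simp add: signed_surj_0_Suc)
  next
    case (Suc b)
    have "of_nat (Suc m) * fps_nth (one_minus_exp_neg ^ Suc b) (Suc m) =
        fps_nth (fps_deriv (one_minus_exp_neg ^ Suc b)) m"
      by (simp only: fps_deriv_nth) simp
    also have "\<dots> = of_nat (Suc b) *
        (fps_nth (one_minus_exp_neg ^ b) m - fps_nth (one_minus_exp_neg ^ Suc b) m)"
      unfolding fps_deriv_one_minus_exp_neg_power
      by (simp add: fps_of_nat[symmetric] del: of_nat_Suc power_Suc)
    finally have deriv: "of_nat (Suc m) * fps_nth (one_minus_exp_neg ^ Suc b) (Suc m) =
        of_nat (Suc b) * (fps_nth (one_minus_exp_neg ^ b) m - fps_nth (one_minus_exp_neg ^ Suc b) m)" .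
    have "fact (Suc m) * fps_nth (one_minus_exp_neg ^ Suc b) (Suc m) =
        fact m * (of_nat (Suc m) * fps_nth (one_minus_exp_neg ^ Suc b) (Suc m))"
      by (simp add: algebra_simps del: power_Suc of_nat_Suc)
    also have "\<dots> = of_nat (Suc b) * (fact m * fps_nth (one_minus_exp_neg ^ b) m
                          - fact m * fps_nth (one_minus_exp_neg ^ Suc b) m)"
      unfolding deriv by (simp add: algebra_simps)
    finally show ?thesis
      unfolding Suc.IH \<open>a = Suc b\<close> by (simp add: signed_surj_Suc_Suc del: power_Suc)
  qed
qed

lemma polyBernoulli_neg:
  "polyBernoulli m (- int k) = (\<Sum>a=0..m. signed_surj a m * of_nat (a + 1) ^ k)"
proof -
  have "polyBernoulli m (- int k) =
      (\<Sum>i=1..m+1. fact m * fps_nth (one_minus_exp_neg ^ (i - 1)) m * of_nat i ^ k)"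
    by (simp add: polyBernoulli_def polyBern_gf_def sum_distrib_left power_int_minus
        divide_inverse algebra_simps)
  also have "\<dots> = (\<Sum>a=0..m. fact m * fps_nth (one_minus_exp_neg ^ a) m * of_nat (a + 1) ^ k)"
    unfolding One_nat_def add_Suc_right add_0_right sum.shift_bounds_cl_Suc_ivl by simp
  finally show ?thesis
    by (simp add: fact_mult_fps_nth_one_minus_exp_neg_power)
qed

definition geom_coeff :: "nat \<Rightarrow> nat \<Rightarrow> 'a::field_char_0" where
  "geom_coeff a j = (if a < j then fact a * fact (j + a) / (fact (2 * a + 1) * fact j) else 0)"

lemma geom_coeff_Suc:
  "of_nat (Suc i) * geom_coeff a (Suc i) =
     of_nat (i + a + 1) * geom_coeff a i + (if i = a then 1 else 0)"
proof -
  consider "a < i" | "i < a" | "i = a" by linarith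
  then show ?thesis
  proof cases
    case 1
    then show ?thesis by (simp add: geom_coeff_def field_simps del: of_nat_Suc)
  next
    case 2
    then show ?thesis by (simp add: geom_coeff_def)
  next
    case 3
    then have "Suc i + a = Suc (2 * a)" by simp
    with 3 show ?thesis by (simp add: geom_coeff_def field_simps mult_2_right del: of_nat_Suc)
  qed
qed

lemma sum_geom_coeff_signed_surj_Suc:
  "(\<Sum>j\<le>Suc N. geom_coeff a j * signed_surj j (Suc N)) =
     of_nat (a + 1) * (\<Sum>j\<le>N. geom_coeff a j * signed_surj j N)
       + (signed_surj a N :: 'a::field_char_0)"
proof -
  have "(\<Sum>j\<le>Suc N. geom_coeff a j * signed_surj j (Suc N)) =
      (\<Sum>j\<le>Suc N. - (of_nat j * geom_coeff a j * signed_surj j N)) +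
      (\<Sum>j\<le>Suc N. if j = 0 then 0 else of_nat j * geom_coeff a j * signed_surj (j - 1) N)"
    unfolding sum.distrib[symmetric]
    by (rule sum.cong) (simp_all add: signed_surj_Suc algebra_simps)
  also have "(\<Sum>j\<le>Suc N. - (of_nat j * geom_coeff a j * signed_surj j N)) =
      (\<Sum>j\<le>N. - (of_nat j * geom_coeff a j * signed_surj j N))"
    by (simp add: signed_surj_eq_0)
  also have "(\<Sum>j\<le>Suc N. if j = 0 then 0 else of_nat j * geom_coeff a j * signed_surj (j - 1) N) =
      (\<Sum>j\<le>N. of_nat (Suc j) * geom_coeff a (Suc j) * signed_surj j N)"
    by (subst sum.atMost_Suc_shift) simp
  also have "(\<Sum>j\<le>N. - (of_nat j * geom_coeff a j * signed_surj j N)) +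
      (\<Sum>j\<le>N. of_nat (Suc j) * geom_coeff a (Suc j) * signed_surj j N) =
      (\<Sum>j\<le>N. (of_nat (Suc j) * geom_coeff a (Suc j) - of_nat j * geom_coeff a j)
                 * signed_surj j N)"
    by (simp add: sum.distrib[symmetric] algebra_simps)
  also have "\<dots> = (\<Sum>j\<le>N. of_nat (a + 1) * (geom_coeff a j * signed_surj j N)
                          + (if j = a then signed_surj j N else 0))"
    by (intro sum.cong refl) (simp add: geom_coeff_Suc del: of_nat_Suc, simp add: algebra_simps)
  also have "\<dots> = of_nat (a + 1) * (\<Sum>j\<le>N. geom_coeff a j * signed_surj j N) + signed_surj a N"
    by (simp add: sum.distrib sum_distrib_left signed_surj_eq_0)
  finally show ?thesis .
qed

lemma geometric_sum_signed_surj: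
  "(\<Sum>m<N. signed_surj a m * of_nat (a + 1) ^ (N - 1 - m)) =
     (\<Sum>j\<le>N. geom_coeff a j * signed_surj j N :: 'a::field_char_0)"
proof (induction N)
  case 0
  then show ?case by (simp add: geom_coeff_def)
next
  case (Suc N)
  have "(\<Sum>m<N. signed_surj a m * of_nat (a + 1) ^ (N - m) :: 'a) =
      of_nat (a + 1) * (\<Sum>m<N. signed_surj a m * of_nat (a + 1) ^ (N - 1 - m) :: 'a)"
    unfolding sum_distrib_left
  proof (rule sum.cong)
    fix m assume "m \<in> {..<N}"
    then have "N - m = Suc (N - 1 - m)" by auto
    then show "signed_surj a m * of_nat (a + 1) ^ (N - m) =
        of_nat (a + 1) * (signed_surj a m * of_nat (a + 1) ^ (N - 1 - m))"
      by (simp only: power_Suc) (simp add: algebra_simps)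
  qed simp
  then have "(\<Sum>m<Suc N. signed_surj a m * of_nat (a + 1) ^ (Suc N - 1 - m) :: 'a) =
      of_nat (a + 1) * (\<Sum>m<N. signed_surj a m * of_nat (a + 1) ^ (N - 1 - m)) + signed_surj a N"
    by simp
  also have "\<dots> = of_nat (a + 1) * (\<Sum>j\<le>N. geom_coeff a j * signed_surj j N) + signed_surj a N"
    by (simp only: Suc.IH)
  finally show ?case
    by (simp only: sum_geom_coeff_signed_surj_Suc)
qed

lemma fact_quotient_Suc_diff:
  "fact (Suc a) * fact (j + Suc a) / fact (2 * Suc a)
     - fact a * fact (j + a) / fact (2 * a) =
   (fact a * fact (j + a) / fact (2 * a + 1) * (of_nat j - 3 * of_nat a - 1) / 2 :: 'a::field_char_0)"
proof -
  have "fact (2 * Suc a) = (2 * of_nat a + 2) * (fact (2 * a + 1) :: 'a)"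
    by (simp add: algebra_simps)
  moreover have "fact (2 * a + 1) = (2 * of_nat a + 1) * (fact (2 * a) :: 'a)"
    by simp
  moreover have "fact (j + Suc a) = (of_nat j + of_nat a + 1) * (fact (j + a) :: 'a)"
    by (simp add: algebra_simps)
  moreover have "fact (Suc a) = (of_nat a + 1) * (fact a :: 'a)"
    by (simp add: algebra_simps)
  moreover have "(2 * of_nat a + 2 :: 'a) \<noteq> 0" "(2 * of_nat a + 1 :: 'a) \<noteq> 0"
    using of_nat_neq_0[of "2 * a + 1", where 'a='a] of_nat_neq_0[of "2 * a", where 'a='a]
    by (simp_all add: add.commute)
  ultimately show ?thesis
    by (simp add: divide_simps) (simp add: algebra_simps)
qed

lemma sum_geom_coeff_weighted_eq_0:
  "(\<Sum>a<j. (3 * of_nat a + 1 - of_nat j) * geom_coeff a j) = (0 :: 'a::field_char_0)"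
proof -
  define g :: "nat \<Rightarrow> 'a" where "g a = fact a * fact (j + a) / fact (2 * a)" for a
  have "(\<Sum>a<j. (3 * of_nat a + 1 - of_nat j) * geom_coeff a j) =
      (\<Sum>a<j. (-2 / fact j) * (g (Suc a) - g a))"
  proof (rule sum.cong)
    fix a assume "a \<in> {..<j}"
    define A :: 'a where "A = fact a * fact (j + a) / fact (2 * a + 1)"
    have "(3 * of_nat a + 1 - of_nat j) * geom_coeff a j = (3 * of_nat a + 1 - of_nat j) * A / fact j"
      using \<open>a \<in> {..<j}\<close> by (simp add: geom_coeff_def A_def)
    also have "\<dots> = (-2 / fact j) * (A * (of_nat j - 3 * of_nat a - 1) / 2)"
      by (simp add: field_simps)
    also have "\<dots> = (-2 / fact j) * (g (Suc a) - g a)"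
      unfolding g_def fact_quotient_Suc_diff A_def by simp
    finally show "(3 * of_nat a + 1 - of_nat j) * geom_coeff a j = (-2 / fact j) * (g (Suc a) - g a)" .
  qed simp
  also have "\<dots> = (-2 / fact j) * (g j - g 0)"
    by (simp only: sum_distrib_left[symmetric] sum_lessThan_telescope)
  also have "\<dots> = 0"
    by (simp add: g_def mult_2)
  finally show ?thesis .
qed

lemma sum_geom_coeff_Suc:
  "of_nat (Suc j) * (\<Sum>a<Suc j. geom_coeff a (Suc j)) =
     2 / 3 * of_nat (2 * j + 1) * (\<Sum>a<j. geom_coeff a j) + (1 :: 'a::field_char_0)"
proof -
  have "of_nat (Suc j) * (\<Sum>a<Suc j. geom_coeff a (Suc j)) =
      (\<Sum>a<Suc j. of_nat (j + a + 1) * geom_coeff a j + (if j = a then 1 else 0) :: 'a)"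
    unfolding sum_distrib_left by (simp only: geom_coeff_Suc)
  also have "\<dots> = (\<Sum>a<j. of_nat (j + a + 1) * geom_coeff a j) + 1"
    by (simp add: sum.distrib geom_coeff_def)
  also have "(\<Sum>a<j. of_nat (j + a + 1) * geom_coeff a j :: 'a) =
      2 / 3 * of_nat (2 * j + 1) * (\<Sum>a<j. geom_coeff a j)"
  proof -
    have "3 * (\<Sum>a<j. of_nat (j + a + 1) * geom_coeff a j) -
        2 * of_nat (2 * j + 1) * (\<Sum>a<j. geom_coeff a j) =
        (\<Sum>a<j. (3 * of_nat a + 1 - of_nat j) * geom_coeff a j :: 'a)"
      unfolding sum_distrib_left sum_subtractf[symmetric]
      by (intro sum.cong refl) (simp add: algebra_simps)
    then show ?thesis
      using sum_geom_coeff_weighted_eq_0[of j, where 'a='a] by (simp add: field_simps mult.commute)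
  qed
  finally show ?thesis .
qed

lemma central_binomial_Suc:
  "Suc n * ((2 * Suc n) choose Suc n) = 2 * (2 * n + 1) * ((2 * n) choose n)"
proof -
  have "(2 * n + 1) choose Suc n = (2 * n + 1) choose n"
    by (subst binomial_symmetric) auto
  then have half: "Suc n * ((2 * n + 1) choose n) = (2 * n + 1) * ((2 * n) choose n)"
    using Suc_times_binomial_eq[of "2 * n" n] by (simp del: binomial_Suc_Suc)
  have "Suc n * (Suc n * ((2 * Suc n) choose Suc n))
      = 2 * Suc n * (Suc n * ((2 * n + 1) choose n))"
    using Suc_times_binomial[of n "2 * n + 1"] by (simp del: binomial_Suc_Suc)
  also have "\<dots> = Suc n * (2 * (2 * n + 1) * ((2 * n) choose n))"
    unfolding half by simp
  finally show ?thesis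
    by (metis mult_left_cancel Suc_neq_Zero)
qed

lemma sum_geom_coeff_closed_form:
  "(\<Sum>a<Suc k. geom_coeff a (Suc k)) =
     of_nat ((2 * Suc k) choose Suc k) / (2 * 3 ^ k) *
     (\<Sum>i=0..k. 3 ^ i / (of_nat (2 * i + 1) * of_nat ((2 * i) choose i)) :: 'a::field_char_0)"
proof (induction k)
  case 0
  then show ?case by (simp add: geom_coeff_def)
next
  case (Suc k)
  define S :: 'a where "S = (\<Sum>i=0..k. 3 ^ i / (of_nat (2 * i + 1) * of_nat ((2 * i) choose i)))"
  define C :: 'a where "C = of_nat ((2 * Suc k) choose Suc k)"
  define D :: 'a where "D = of_nat ((2 * Suc (Suc k)) choose Suc (Suc k))"
  have D: "of_nat (Suc (Suc k)) * D = 2 * of_nat (2 * Suc k + 1) * C"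
    unfolding C_def D_def by (metis central_binomial_Suc of_nat_mult of_nat_numeral)
  have "C \<noteq> 0"
    by (simp add: C_def del: binomial_Suc_Suc)
  have S_Suc: "(\<Sum>i=0..Suc k. 3 ^ i / (of_nat (2 * i + 1) * of_nat ((2 * i) choose i))) =
      S + 3 ^ Suc k / (of_nat (2 * Suc k + 1) * C)"
    unfolding S_def C_def by (rule sum.atLeast0_atMost_Suc)
  have "of_nat (Suc (Suc k)) * (\<Sum>a<Suc (Suc k). geom_coeff a (Suc (Suc k))) =
      2 / 3 * of_nat (2 * Suc k + 1) * (C / (2 * 3 ^ k) * S) + 1"
    unfolding sum_geom_coeff_Suc Suc.IH S_def C_def ..
  also have "\<dots> = 2 * of_nat (2 * Suc k + 1) * C / (2 * 3 ^ Suc k) *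
      (S + 3 ^ Suc k / (of_nat (2 * Suc k + 1) * C))"
    using \<open>C \<noteq> 0\<close> by (simp add: field_simps del: of_nat_Suc)
  also have "\<dots> = of_nat (Suc (Suc k)) *
      (D / (2 * 3 ^ Suc k) * (S + 3 ^ Suc k / (of_nat (2 * Suc k + 1) * C)))"
    unfolding D[symmetric] by simp
  finally have "(\<Sum>a<Suc (Suc k). geom_coeff a (Suc (Suc k))) =
      D / (2 * 3 ^ Suc k) * (S + 3 ^ Suc k / (of_nat (2 * Suc k + 1) * C))"
    by (simp only: mult_left_cancel[OF of_nat_neq_0])
  then show ?case
    unfolding S_Suc D_def .
qed

lemma sum_polyBernoulli_antidiagonal:
  "(\<Sum>k=0..n. polyBernoulli (n - k) (- int k)) =
     (\<Sum>j=1..n+1. signed_surj j (n + 1) * (\<Sum>a<j. geom_coeff a j))"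
proof -
  have "(\<Sum>k=0..n. polyBernoulli (n - k) (- int k)) =
      (\<Sum>k=0..n. \<Sum>a=0..n. signed_surj a (n - k) * of_nat (a + 1) ^ k)"
  proof (rule sum.cong[OF refl])
    fix k assume "k \<in> {0..n}"
    then show "polyBernoulli (n - k) (- int k) = (\<Sum>a=0..n. signed_surj a (n - k) * of_nat (a + 1) ^ k)"
      unfolding polyBernoulli_neg
      by (intro sum.mono_neutral_left) (auto simp: signed_surj_eq_0)
  qed
  also have "\<dots> = (\<Sum>a=0..n. \<Sum>m<Suc n. signed_surj a m * of_nat (a + 1) ^ (Suc n - 1 - m))"
    by (subst sum.atLeastAtMost_rev, subst sum.swap) (simp add: atLeast0AtMost lessThan_Suc_atMost)
  also have "\<dots> = (\<Sum>j\<le>Suc n. signed_surj j (Suc n) * (\<Sum>a=0..n. geom_coeff a j))"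
    unfolding geometric_sum_signed_surj
    by (subst sum.swap) (simp add: sum_distrib_left algebra_simps)
  also have "\<dots> = (\<Sum>j\<le>Suc n. signed_surj j (Suc n) * (\<Sum>a<j. geom_coeff a j))"
  proof (rule sum.cong[OF refl])
    fix j assume "j \<in> {..Suc n}"
    then have "(\<Sum>a=0..n. geom_coeff a j) = (\<Sum>a<j. geom_coeff a j :: rat)"
      by (intro sum.mono_neutral_right) (auto simp: geom_coeff_def)
    then show "signed_surj j (Suc n) * (\<Sum>a=0..n. geom_coeff a j) =
        signed_surj j (Suc n) * (\<Sum>a<j. geom_coeff a j :: rat)"
      by simp
  qed
  also have "\<dots> = (\<Sum>j=1..n+1. signed_surj j (n + 1) * (\<Sum>a<j. geom_coeff a j))"
    by (simp add: atMost_atLeast0 sum.atLeast_Suc_atMost signed_surj_0_Suc)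
  finally show ?thesis .
qed

theorem corollary3p6:
  fixes n :: nat
  shows "(\<Sum>k=0..n. polyBernoulli (n - k) (- int k)) =
    ((-1) ^ (n + 1) / 2) *
      (\<Sum>j=1..n+1. (-1) ^ j * fact j * of_nat (Stirling (n + 1) j)
         * of_nat ((2 * j) choose j) / 3 ^ (j - 1)
         * (\<Sum>i=0..j-1. 3 ^ i / (of_nat (2 * i + 1) * of_nat ((2 * i) choose i))))"
  unfolding sum_polyBernoulli_antidiagonal
proof (subst sum_distrib_left, rule sum.cong[OF refl])
  fix j assume "j \<in> {1..n+1}"
  then obtain k where "j = Suc k" by (cases j) auto
  then show "signed_surj j (n + 1) * (\<Sum>a<j. geom_coeff a j) =
      (-1) ^ (n + 1) / 2 * ((-1) ^ j * fact j * of_nat (Stirling (n + 1) j)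
         * of_nat ((2 * j) choose j) / 3 ^ (j - 1)
         * (\<Sum>i=0..j-1. 3 ^ i / (of_nat (2 * i + 1) * of_nat ((2 * i) choose i)) :: rat))"
    unfolding \<open>j = Suc k\<close> sum_geom_coeff_closed_form
    by (simp add: signed_surj_def power_add del: binomial_Suc_Suc)
qed

end
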